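(* Let $k$ be an odd positive integer, $\ell\in\{0,1,2,\ldots\}$ and $a$ real. Whenever all the arguments of $\tilde\gamma_\cdot$ below are positive, one has $$\sum_{r=1}^{k}(-1)^{r-1}\tilde\gamma_\ell\left(\frac rk-a\right)=k\sum_{j=0}^{\ell}(-1)^j\binom{\ell}{j}\tilde\gamma_{\ell-j}(1-ak)\log^jk,$$ and, if in addition $a>0$, $$\sum_{r=1}^{k}(-1)^{r-1}\tilde\gamma_\ell\left(\frac rk+a\right)=k\sum_{j=0}^{\ell-1}(-1)^j\binom{\ell}{j}\tilde\gamma_{\ell-j}(1+ak)\log^jk+k(-1)^\ell\tilde\psi(ak)\log^\ell k+\frac{(-1)^\ell}{a}\log^\ell k.$$
   Context: For $q>0$, $\zeta_E(z,q)=\sum_{n=0}^\infty (-1)^n (n+q)^{-z}$ for $\mathrm{Re}(z)>0$, extended by analytic continuation to an entire function of $z$. The modified Stieltjes constants $\tilde\gamma_m(q)$ are defined by the Taylor expansion $\zeta_E(z,q)=\sum_{m=0}^\infty\frac{(-1)^m\tilde\gamma_m(q)}{m!}(z-1)^m$. The modified digamma function is $\tilde\psi(q):=-\tilde\gamma_0(q)=-\zeta_E(1,q)$. Convention: $\log^0 k=1$. *)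

theory Defs
  imports "HOL-Complex_Analysis.Complex_Analysis"
begin

text \<open>Alternating Hurwitz zeta function, given by its (conditionally convergent)
  defining series; this is the correct value on the half plane Re z > 0, which
  contains a neighbourhood of z = 1, where all Taylor coefficients are taken.\<close>
definition zeta_E :: "complex \<Rightarrow> real \<Rightarrow> complex" where
  "zeta_E z q = (\<Sum>n. (-1) ^ n * (complex_of_real (real n + q)) powr (- z))"

text \<open>Modified Stieltjes constants: zeta_E(z,q) = sum_m (-1)^m gamma_m(q)/m! (z-1)^m,
  i.e. gamma_m(q) = (-1)^m times the m-th derivative at 1 (the value is real).\<close>
definition mod_stieltjes :: "nat \<Rightarrow> real \<Rightarrow> real" where
  "mod_stieltjes m q = Re ((-1) ^ m * (deriv ^^ m) (\<lambda>z. zeta_E z q) 1)"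

definition mod_digamma :: "real \<Rightarrow> real" where
  "mod_digamma q = - mod_stieltjes 0 q"

end

theory Submission
  imports Defs
begin

text \<open>Grouping the alternating series of \<open>zeta_E z q\<close> into blocks of \<open>k\<close> consecutive terms
  (for odd \<open>k\<close> the block with index \<open>n\<close> carries the sign \<open>(-1)^n\<close>) gives the multiplication
  formula \<open>\<Sum>r<k. (-1)^r zeta_E z ((q + r)/k) = k^z zeta_E z q\<close> for \<open>Re z > 0\<close>.
  Both sides are holomorphic there, because the series with consecutive terms paired
  converges absolutely and locally uniformly. Differentiating \<open>l\<close> times at \<open>z = 1\<close> by the
  Leibniz rule gives the first identity with \<open>q = 1 - a k\<close>. The second one is the case
  \<open>q = 1 + a k\<close>, after the term \<open>j = l\<close> is rewritten with the functional equation
  \<open>zeta_E 1 q + zeta_E 1 (q + 1) = 1/q\<close>.\<close>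

lemma norm_of_real_powr_diff_le:
  assumes a: "a > 0" and z: "Re z \<ge> -1"
  shows "norm (complex_of_real a powr - z - complex_of_real (a + 1) powr - z)
           \<le> norm z * a powr (- Re z - 1)"
proof -
  define S where "S = complex_of_real ` {a..a+1}"
  have "norm (complex_of_real a powr - z - complex_of_real (a + 1) powr - z)
          \<le> norm z * a powr (- Re z - 1) * norm (complex_of_real a - complex_of_real (a + 1))"
  proof (rule field_differentiable_bound)
    show "convex S"
      unfolding S_def by (rule convex_linear_image[OF linear_of_real convex_real_interval(5)])
    fix w assume "w \<in> S"
    then obtain t where t: "w = complex_of_real t" "a \<le> t" by (auto simp: S_def)
    then have "w \<notin> \<real>\<^sub>\<le>\<^sub>0" using a by (simp add: complex_nonpos_Reals_iff)
    then show "((\<lambda>w. w powr - z) has_field_derivative (- z * w powr (- z - 1))) (at w within S)"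
      by (rule has_field_derivative_at_within[OF has_field_derivative_powr])
    have "norm (- z * w powr (- z - 1)) = norm z * t powr (- Re z - 1)"
      using t a by (simp add: norm_mult norm_powr_real_powr)
    also have "\<dots> \<le> norm z * a powr (- Re z - 1)"
      using t a z by (intro mult_left_mono powr_mono2') auto
    finally show "norm (- z * w powr (- z - 1)) \<le> norm z * a powr (- Re z - 1)" .
  qed (auto simp: S_def simp del: of_real_add intro!: imageI)
  then show ?thesis by simp
qed

lemma sums_if_paired_sums:
  fixes f :: "nat \<Rightarrow> 'a::real_normed_vector"
  assumes pairs: "(\<lambda>n. f (2 * n) + f (2 * n + 1)) sums s" and f: "f \<longlonglongrightarrow> 0"
  shows "f sums s"
proof -
  have even_sums: "(\<Sum>i<2 * m. f i) = (\<Sum>i<m. f (2 * i) + f (2 * i + 1))" for m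
    by (induction m) (simp_all add: algebra_simps)
  have "(\<lambda>m. \<Sum>i<2 * m. f i) \<longlonglongrightarrow> s"
    using pairs unfolding sums_def even_sums .
  from filterlim_compose[OF this filterlim_at_top_div_const_nat[of 2]]
  have even_part: "(\<lambda>n. \<Sum>i<2 * (n div 2). f i) \<longlonglongrightarrow> s"
    by simp
  have f_shift: "(\<lambda>n. f (n - 1)) \<longlonglongrightarrow> 0"
    using filterlim_compose[OF f filterlim_minus_const_nat_at_top[of 1]] by simp
  have odd_part: "(\<lambda>n. if odd n then f (n - 1) else 0) \<longlonglongrightarrow> 0"
    by (rule Lim_null_comparison[OF _ tendsto_norm_zero[OF f_shift]]) auto
  have "(\<lambda>n. \<Sum>i<n. f i) = (\<lambda>n. (\<Sum>i<2 * (n div 2). f i) + (if odd n then f (n - 1) else 0))"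
  proof
    fix n
    show "(\<Sum>i<n. f i) = (\<Sum>i<2 * (n div 2). f i) + (if odd n then f (n - 1) else 0)"
    proof (cases "even n")
      case False
      then obtain m where "n = 2 * m + 1" by (auto elim: oddE)
      then show ?thesis by simp
    qed simp
  qed
  then show ?thesis
    unfolding sums_def using tendsto_add[OF even_part odd_part] by simp
qed

definition zeta_E_pair :: "complex \<Rightarrow> real \<Rightarrow> nat \<Rightarrow> complex" where
  "zeta_E_pair z q n =
     complex_of_real (2 * real n + q) powr - z - complex_of_real (2 * real n + q + 1) powr - z"

lemma norm_zeta_E_pair_le:
  assumes q: "q > 0" and n: "n \<ge> 1" and s: "-1 \<le> s" "s \<le> Re z"
  shows "norm (zeta_E_pair z q n) \<le> norm z * real n powr (- s - 1)"
proof -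
  have "norm (zeta_E_pair z q n) \<le> norm z * (2 * real n + q) powr (- Re z - 1)"
    unfolding zeta_E_pair_def using q s by (intro norm_of_real_powr_diff_le) auto
  also have "\<dots> \<le> norm z * (2 * real n + q) powr (- s - 1)"
    using n q s by (intro mult_left_mono powr_mono) auto
  also have "\<dots> \<le> norm z * real n powr (- s - 1)"
    using n q s by (intro mult_left_mono powr_mono2') auto
  finally show ?thesis .
qed

lemma summable_norm_zeta_E_pair:
  assumes "q > 0" "Re z > 0"
  shows "summable (\<lambda>n. norm (zeta_E_pair z q n))"
proof (rule summable_comparison_test_ev)
  show "summable (\<lambda>n. norm z * real n powr (- Re z - 1))"
    using assms by (intro summable_mult) (simp add: summable_real_powr_iff)
  show "\<forall>\<^sub>F n in sequentially. norm (norm (zeta_E_pair z q n)) \<le> norm z * real n powr (- Re z - 1)"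
    using assms by (intro eventually_sequentiallyI[of 1]) (simp add: norm_zeta_E_pair_le)
qed

lemma zeta_E_sums:
  assumes q: "q > 0" and z: "Re z > 0"
  shows "(\<lambda>n. (-1) ^ n * complex_of_real (real n + q) powr - z) sums zeta_E z q"
proof -
  define f where "f n = (-1) ^ n * complex_of_real (real n + q) powr - z" for n
  have "f (2 * n) + f (2 * n + 1) = zeta_E_pair z q n" for n
    by (simp add: f_def zeta_E_pair_def add_ac)
  then have pairs: "(\<lambda>n. f (2 * n) + f (2 * n + 1)) sums (\<Sum>n. zeta_E_pair z q n)"
    using summable_norm_cancel[OF summable_norm_zeta_E_pair[OF q z]] by (simp add: summable_sums)
  have "(\<lambda>n. norm (f n)) \<longlonglongrightarrow> 0"
  proof -
    have "norm (f n) = (real n + q) powr - Re z" for n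
      using q by (simp add: f_def norm_mult norm_power norm_powr_real_powr add_nonneg_pos)
    moreover have "filterlim (\<lambda>n. real n + q) at_top sequentially"
      using filterlim_tendsto_add_at_top[OF tendsto_const filterlim_real_sequentially]
      by (simp add: add.commute)
    ultimately show ?thesis
      using z by (simp add: tendsto_neg_powr)
  qed
  then have "f sums (\<Sum>n. zeta_E_pair z q n)"
    using sums_if_paired_sums[OF pairs] by (simp add: tendsto_norm_zero_iff)
  then show ?thesis
    unfolding zeta_E_def f_def by (simp add: sums_iff)
qed

lemma zeta_E_pair_sums:
  assumes "q > 0" "Re z > 0"
  shows "zeta_E_pair z q sums zeta_E z q"
proof -
  have "sum (\<lambda>n. (-1) ^ n * complex_of_real (real n + q) powr - z) {n * 2..<n * 2 + 2}
          = zeta_E_pair z q n" for n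
  proof -
    have "{n * 2..<n * 2 + 2} = {2 * n, 2 * n + 1}" by auto
    then show ?thesis by (simp add: zeta_E_pair_def power_mult add_ac)
  qed
  then show ?thesis
    using sums_group[OF zeta_E_sums[OF assms], of 2] by simp
qed

lemma uniform_limit_zeta_E_pair:
  assumes q: "q > 0" and x: "Re x > 0"
  shows "uniform_limit (cball x (Re x / 2)) (\<lambda>n z. \<Sum>i<n. zeta_E_pair z q i)
           (\<lambda>z. \<Sum>n. zeta_E_pair z q n) sequentially"
proof (rule Weierstrass_m_test_ev)
  define s where "s = Re x / 2"
  show "summable (\<lambda>n. (norm x + s) * real n powr (- s - 1))"
    using x by (intro summable_mult) (simp add: s_def summable_real_powr_iff)
  show "\<forall>\<^sub>F n in sequentially. \<forall>z\<in>cball x (Re x / 2).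
          norm (zeta_E_pair z q n) \<le> (norm x + s) * real n powr (- s - 1)"
  proof (intro eventually_sequentiallyI[of 1] ballI)
    fix n :: nat and z assume n: "n \<ge> 1" and "z \<in> cball x (Re x / 2)"
    then have "norm (x - z) \<le> s" by (simp add: s_def dist_norm)
    moreover have "Re x - Re z \<le> norm (x - z)" and "norm z \<le> norm x + norm (x - z)"
      using abs_Re_le_cmod[of "x - z"] norm_triangle_sub[of z x] by (auto simp: norm_minus_commute)
    ultimately have z: "s \<le> Re z" "norm z \<le> norm x + s"
      by (auto simp: s_def)
    have "norm (zeta_E_pair z q n) \<le> norm z * real n powr (- s - 1)"
      using q n z x by (intro norm_zeta_E_pair_le) (auto simp: s_def)
    also have "\<dots> \<le> (norm x + s) * real n powr (- s - 1)"
      using z by (intro mult_right_mono) auto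
    finally show "norm (zeta_E_pair z q n) \<le> (norm x + s) * real n powr (- s - 1)" .
  qed
qed

lemma holomorphic_zeta_E:
  assumes q: "q > 0"
  shows "(\<lambda>z. zeta_E z q) holomorphic_on {z. Re z > 0}"
proof -
  have "(\<lambda>z. \<Sum>n. zeta_E_pair z q n) holomorphic_on {z. Re z > 0}"
  proof (rule holomorphic_uniform_sequence)
    show "open {z. Re z > 0}"
      by (rule open_halfspace_Re_gt)
    show "(\<lambda>z. \<Sum>i<n. zeta_E_pair z q i) holomorphic_on {z. Re z > 0}" for n
      unfolding zeta_E_pair_def by (intro holomorphic_intros)
    fix x assume x: "x \<in> {z. Re z > 0}"
    have "cball x (Re x / 2) \<subseteq> {z. Re z > 0}"
    proof
      fix z assume "z \<in> cball x (Re x / 2)"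
      then have "Re x - Re z \<le> Re x / 2"
        using abs_Re_le_cmod[of "x - z"] by (simp add: dist_norm)
      with x show "z \<in> {z. Re z > 0}" by simp
    qed
    then show "\<exists>d>0. cball x d \<subseteq> {z. Re z > 0} \<and>
        uniform_limit (cball x d) (\<lambda>n z. \<Sum>i<n. zeta_E_pair z q i) (\<lambda>z. \<Sum>n. zeta_E_pair z q n) sequentially"
      using x uniform_limit_zeta_E_pair[OF q, of x] by (intro exI[of _ "Re x / 2"]) auto
  qed
  then show ?thesis
    by (rule holomorphic_transform) (use q zeta_E_pair_sums in \<open>auto simp: sums_iff\<close>)
qed

lemma zeta_E_plus_one:
  assumes q: "q > 0" and z: "Re z > 0"
  shows "zeta_E z (q + 1) = complex_of_real q powr - z - zeta_E z q"
proof -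
  define f where "f n = (-1) ^ n * complex_of_real (real n + q) powr - z" for n
  have "(\<lambda>n. f (Suc n)) = (\<lambda>n. - ((-1) ^ n * complex_of_real (real n + (q + 1)) powr - z))"
    by (simp add: f_def fun_eq_iff add_ac)
  then have "(\<lambda>n. f (Suc n)) sums (- zeta_E z (q + 1))"
    using sums_minus[OF zeta_E_sums[of "q + 1" z]] q z by simp
  then have "f sums (- zeta_E z (q + 1) + f 0)"
    by (simp add: sums_Suc_iff)
  moreover have "f sums zeta_E z q"
    unfolding f_def using q z by (rule zeta_E_sums)
  ultimately have "zeta_E z q = - zeta_E z (q + 1) + f 0"
    by (simp add: sums_iff)
  then show ?thesis
    by (simp add: f_def)
qed

lemma mod_digamma_plus_one:
  assumes "q > 0"
  shows "mod_digamma (q + 1) = - mod_digamma q - 1 / q"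
proof -
  have "complex_of_real q powr - 1 = complex_of_real (1 / q)"
    using powr_of_real[of q "- 1"] assms by (simp add: powr_minus_divide)
  then show ?thesis
    using zeta_E_plus_one[OF assms, of 1] by (simp add: mod_digamma_def mod_stieltjes_def)
qed

lemma zeta_E_multiplication:
  assumes k: "odd k" and q: "q > 0" and z: "Re z > 0"
  shows "(\<Sum>r<k. (-1) ^ r * zeta_E z ((q + real r) / real k)) = of_nat k powr z * zeta_E z q"
proof -
  have k0: "real k > 0" using k by (simp add: odd_pos)
  have pos: "(q + real r) / real k > 0" for r
    using q k0 by simp
  define c where "c = (of_nat k :: complex) powr - z"
  define g where "g n = (-1) ^ n * complex_of_real (real n + q) powr - z" for n
  define h where "h n r = (-1) ^ r * ((-1) ^ n * complex_of_real (real n + (q + real r) / real k) powr - z)"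
    for n r
  have "(\<lambda>n. \<Sum>r<k. h n r) sums (\<Sum>r<k. (-1) ^ r * zeta_E z ((q + real r) / real k))"
    unfolding h_def using pos z by (intro sums_sum sums_mult zeta_E_sums)
  then have "(\<lambda>n. c * (\<Sum>r<k. h n r)) sums (c * (\<Sum>r<k. (-1) ^ r * zeta_E z ((q + real r) / real k)))"
    by (rule sums_mult)
  moreover have "sum g {n * k..<n * k + k} = c * (\<Sum>r<k. h n r)" for n
  proof -
    have "sum g {n * k..<n * k + k} = (\<Sum>r<k. g (n * k + r))"
      using sum.shift_bounds_nat_ivl[of g 0 "n * k" k] by (simp add: add.commute lessThan_atLeast0)
    also have "\<dots> = (\<Sum>r<k. c * h n r)"
    proof (rule sum.cong[OF refl])
      fix r
      have "real (n * k + r) + q = real k * (real n + (q + real r) / real k)"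
        using k0 by (simp add: field_simps)
      moreover have "(-1 :: complex) ^ (n * k + r) = (-1) ^ n * (-1) ^ r"
        using k by (simp add: power_add minus_one_power_iff)
      moreover have "complex_of_real (real k * (real n + (q + real r) / real k)) powr - z
                       = c * complex_of_real (real n + (q + real r) / real k) powr - z"
        unfolding c_def using pos[of r] by (simp add: powr_times_real add_nonneg_nonneg)
      ultimately show "g (n * k + r) = c * h n r"
        by (simp add: g_def h_def)
    qed
    finally show ?thesis by (simp add: sum_distrib_left)
  qed
  moreover have "g sums zeta_E z q"
    unfolding g_def using q z by (rule zeta_E_sums)
  then have "(\<lambda>n. sum g {n * k..<n * k + k}) sums zeta_E z q"
    using k0 by (intro sums_group) simp_all
  ultimately have "zeta_E z q = c * (\<Sum>r<k. (-1) ^ r * zeta_E z ((q + real r) / real k))"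
    by (simp add: sums_iff)
  moreover have "of_nat k powr z * c = 1"
    using k0 by (simp add: c_def powr_def flip: exp_add)
  ultimately show ?thesis
    by (metis mult.assoc mult_1)
qed

lemma higher_deriv_sum:
  fixes f :: "'i \<Rightarrow> complex \<Rightarrow> complex"
  assumes "finite I" "\<And>i. i \<in> I \<Longrightarrow> f i holomorphic_on S" "open S" "z \<in> S"
  shows "(deriv ^^ n) (\<lambda>w. \<Sum>i\<in>I. f i w) z = (\<Sum>i\<in>I. (deriv ^^ n) (f i) z)"
  using assms(1,2)
proof (induction I rule: finite_induct)
  case (insert i I)
  have "(deriv ^^ n) (\<lambda>w. f i w + (\<Sum>i\<in>I. f i w)) z
          = (deriv ^^ n) (f i) z + (deriv ^^ n) (\<lambda>w. \<Sum>i\<in>I. f i w) z"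
    using insert assms(3,4) by (intro higher_deriv_add) (auto intro!: holomorphic_on_sum)
  with insert show ?case by simp
qed simp

lemma higher_deriv_powr_right:
  assumes "w \<noteq> 0"
  shows "(deriv ^^ n) (\<lambda>z. w powr z) = (\<lambda>z. Ln w ^ n * w powr z)"
proof (induction n)
  case (Suc n)
  have "(deriv ^^ Suc n) (\<lambda>z. w powr z) = deriv (\<lambda>z. Ln w ^ n * w powr z)"
    by (simp add: Suc.IH)
  also have "\<dots> = (\<lambda>z. Ln w ^ Suc n * w powr z)"
    using assms by (intro ext DERIV_imp_deriv) (auto intro!: derivative_eq_intros)
  finally show ?case .
qed simp

lemma higher_deriv_zeta_E_multiplication:
  assumes k: "odd k" and q: "q > 0" and w: "Re w > 0"
  shows "(\<Sum>r<k. (-1) ^ r * (deriv ^^ l) (\<lambda>z. zeta_E z ((q + real r) / real k)) w)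
           = (\<Sum>i=0..l. of_nat (l choose i) * (Ln (of_nat k) ^ i * of_nat k powr w)
                         * (deriv ^^ (l - i)) (\<lambda>z. zeta_E z q) w)"
proof -
  define S where "S = {z :: complex. Re z > 0}"
  have S: "open S" "w \<in> S"
    using w by (auto simp: S_def open_halfspace_Re_gt)
  have k0: "k > 0" using k by (simp add: odd_pos)
  have hol: "(\<lambda>z. zeta_E z x) holomorphic_on S" if "x > 0" for x
    unfolding S_def using that by (rule holomorphic_zeta_E)
  have hol_r: "(\<lambda>z. zeta_E z ((q + real r) / real k)) holomorphic_on S" for r
    using q k0 by (intro hol) simp
  have "(\<Sum>r<k. (-1) ^ r * (deriv ^^ l) (\<lambda>z. zeta_E z ((q + real r) / real k)) w)
          = (\<Sum>r<k. (deriv ^^ l) (\<lambda>z. (-1) ^ r * zeta_E z ((q + real r) / real k)) w)"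
    using S hol_r by (intro sum.cong refl higher_deriv_cmult[symmetric])
  also have "\<dots> = (deriv ^^ l) (\<lambda>z. \<Sum>r<k. (-1) ^ r * zeta_E z ((q + real r) / real k)) w"
    using S hol_r by (intro higher_deriv_sum[symmetric]) (auto intro!: holomorphic_intros)
  also have "\<dots> = (deriv ^^ l) (\<lambda>z. of_nat k powr z * zeta_E z q) w"
    using S hol_r hol[OF q] k q
    by (intro higher_deriv_transform_within_open[where S = S])
       (auto intro!: holomorphic_intros simp: S_def zeta_E_multiplication)
  also have "\<dots> = (\<Sum>i=0..l. of_nat (l choose i) * (Ln (of_nat k) ^ i * of_nat k powr w)
                                * (deriv ^^ (l - i)) (\<lambda>z. zeta_E z q) w)"
    using S hol[OF q] k0
    by (simp add: higher_deriv_mult[where S = S] holomorphic_on_powr_right higher_deriv_powr_right)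
  finally show ?thesis .
qed

lemma mod_stieltjes_multiplication:
  assumes k: "odd k" and q: "q > 0"
  shows "(\<Sum>r<k. (-1) ^ r * mod_stieltjes l ((q + real r) / real k))
           = real k * (\<Sum>j=0..l. (-1) ^ j * real (l choose j) * mod_stieltjes (l - j) q * ln (real k) ^ j)"
proof -
  define D where "D m x = (deriv ^^ m) (\<lambda>z. zeta_E z x) 1" for m x
  have Re_sign: "Re ((-1) ^ m * u) = (-1) ^ m * Re u" for m and u :: complex
    by (cases "even m") simp_all
  have k0: "k > 0" using k by (simp add: odd_pos)
  have "(\<Sum>r<k. (-1) ^ r * mod_stieltjes l ((q + real r) / real k))
          = Re ((-1) ^ l * (\<Sum>r<k. (-1) ^ r * D l ((q + real r) / real k)))"
    by (simp add: mod_stieltjes_def D_def Re_sign sum_distrib_left mult.left_commute)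
  also have "\<dots> = Re ((-1) ^ l * (\<Sum>i=0..l. of_nat (l choose i) * (Ln (of_nat k) ^ i * of_nat k)
                                              * D (l - i) q))"
    using higher_deriv_zeta_E_multiplication[OF k q, of 1 l] by (simp add: D_def)
  also have "\<dots> = Re (\<Sum>j=0..l. complex_of_real (real k * ((-1) ^ j * real (l choose j) * ln (real k) ^ j))
                                   * ((-1) ^ (l - j) * D (l - j) q))"
    unfolding sum_distrib_left
  proof (intro arg_cong[where f = Re] sum.cong refl)
    fix j assume "j \<in> {0..l}"
    then have "(-1 :: complex) ^ l = (-1) ^ j * (-1) ^ (l - j)"
      by (simp flip: power_add)
    then show "(-1) ^ l * (of_nat (l choose j) * (Ln (of_nat k) ^ j * of_nat k) * D (l - j) q)
                 = complex_of_real (real k * ((-1) ^ j * real (l choose j) * ln (real k) ^ j))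
                   * ((-1) ^ (l - j) * D (l - j) q)"
      using k0 by simp
  qed
  also have "\<dots> = (\<Sum>j=0..l. real k * ((-1) ^ j * real (l choose j) * ln (real k) ^ j)
                              * Re ((-1) ^ (l - j) * D (l - j) q))"
  proof -
    have "Re (complex_of_real x * u) = x * Re u" for x u
      by simp
    then show ?thesis
      by (simp only: Re_sum)
  qed
  finally show ?thesis
    by (simp add: mod_stieltjes_def D_def sum_distrib_left mult_ac)
qed

lemma mod_stieltjes_alternating_sum:
  assumes k: "odd k" and b: "1 + b * real k > 0"
  shows "(\<Sum>r=1..k. (-1) ^ (r - 1) * mod_stieltjes l (real r / real k + b))
           = real k * (\<Sum>j=0..l. (-1) ^ j * real (l choose j)
                                  * mod_stieltjes (l - j) (1 + b * real k) * ln (real k) ^ j)"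
proof -
  have "real (Suc r) / real k + b = (1 + b * real k + real r) / real k" for r
    using k by (simp add: odd_pos field_simps)
  then have "(\<Sum>r=1..k. (-1) ^ (r - 1) * mod_stieltjes l (real r / real k + b))
               = (\<Sum>r<k. (-1) ^ r * mod_stieltjes l ((1 + b * real k + real r) / real k))"
    by (simp add: sum.atLeast1_atMost_eq)
  then show ?thesis
    using mod_stieltjes_multiplication[OF k b] by simp
qed

lemma mod_stieltjes_alternating_sum_pos_shift:
  assumes k: "odd k" and a: "a > 0"
  shows "(\<Sum>r=1..k. (-1) ^ (r - 1) * mod_stieltjes l (real r / real k + a))
           = real k * (\<Sum>j<l. (-1) ^ j * real (l choose j)
                                * mod_stieltjes (l - j) (1 + a * real k) * ln (real k) ^ j)
             + real k * (-1) ^ l * mod_digamma (a * real k) * ln (real k) ^ l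
             + (-1) ^ l / a * ln (real k) ^ l"
proof -
  have k0: "real k > 0" using k by (simp add: odd_pos)
  have ak: "a * real k > 0" using a k0 by simp
  have digamma: "mod_stieltjes 0 (1 + a * real k) = mod_digamma (a * real k) + 1 / (a * real k)"
    using mod_digamma_plus_one[OF ak] by (simp add: mod_digamma_def add.commute)
  have "real k * (-1) ^ l * mod_stieltjes 0 (1 + a * real k) * ln (real k) ^ l
          = real k * (-1) ^ l * mod_digamma (a * real k) * ln (real k) ^ l
            + (-1) ^ l / a * ln (real k) ^ l"
    unfolding digamma using a k0 by (simp add: field_simps)
  moreover have "(\<Sum>r=1..k. (-1) ^ (r - 1) * mod_stieltjes l (real r / real k + a))
          = real k * (\<Sum>j<l. (-1) ^ j * real (l choose j)
                               * mod_stieltjes (l - j) (1 + a * real k) * ln (real k) ^ j)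
            + real k * (-1) ^ l * mod_stieltjes 0 (1 + a * real k) * ln (real k) ^ l"
    using mod_stieltjes_alternating_sum[OF k, of a l] ak
    by (simp add: atLeast0AtMost flip: lessThan_Suc_atMost) (simp add: algebra_simps)
  ultimately show ?thesis
    by linarith
qed

theorem proposition5p6:
  fixes k l :: nat and a :: real
  assumes "odd k" and "k > 0"
  shows "((\<forall>r\<in>{1..k}. real r / real k - a > 0) \<and> 1 - a * real k > 0 \<longrightarrow>
           (\<Sum>r=1..k. (-1) ^ (r - 1) * mod_stieltjes l (real r / real k - a)) =
           real k * (\<Sum>j=0..l. (-1) ^ j * real (l choose j) *
               mod_stieltjes (l - j) (1 - a * real k) * ln (real k) ^ j))
       \<and> (a > 0 \<and> (\<forall>r\<in>{1..k}. real r / real k + a > 0) \<and> 1 + a * real k > 0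
            \<and> a * real k > 0 \<longrightarrow>
           (\<Sum>r=1..k. (-1) ^ (r - 1) * mod_stieltjes l (real r / real k + a)) =
           real k * (\<Sum>j<l. (-1) ^ j * real (l choose j) *
               mod_stieltjes (l - j) (1 + a * real k) * ln (real k) ^ j)
           + real k * (-1) ^ l * mod_digamma (a * real k) * ln (real k) ^ l
           + (-1) ^ l / a * ln (real k) ^ l)"
  \<comment> \<open>Only \<open>1 - a k > 0\<close>, resp. \<open>a > 0\<close>, is needed; the other positivity hypotheses follow.\<close>
  using mod_stieltjes_alternating_sum[OF \<open>odd k\<close>, of "- a" l]
        mod_stieltjes_alternating_sum_pos_shift[OF \<open>odd k\<close>, of a l]
  by auto

end
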